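(* Fix $N\in\mathbb N$ and $p\in\mathbb N$. Let $X_k^\star=\sum_{j=-2}^{N-1}x_k^{j,\star}\phi^j$ be the optimal state of the stochastic LQ problem described in the context, where $x^{j,\star}$ is the optimal state trajectory of the coefficient problem $\mathcal P_j$, and define the moving-horizon truncation $X_k^{\mathrm{trun},\star}:=\sum_{j\in\{-2,-1\}\cup\{\max(0,k-p),\dots,k-1\}}x_k^{j,\star}\phi^j$. Then for $k\in\{0,\dots,N-1\}$ the truncation error $\Delta X_k(p+2):=X_k^\star-X_k^{\mathrm{trun},\star}$ satisfies $$\Delta X_k(p+2)=\begin{cases}0, & k\le p,\\ \sum_{j=0}^{k-p-1}\bar A_{j+1}^{k-1}Ew^0\phi^j, & \text{otherwise}.\end{cases}$$
   Context: Matrices $A\in\mathbb R^{n_x\times n_x}$, $B\in\mathbb R^{n_x\times n_u}$, $E\in\mathbb R^{n_x\times1}$; $Q_N,Q\succeq0$, $R\succ0$; $(A,B)$ stabilizable, $(A,Q^{1/2})$ detectable. There are independent random variables $\xi_{\mathrm{ini}},\xi_0,\xi_1,\dots$ ($\xi_0,\xi_1,\dots$ i.i.d.) and real functions $\varphi^1,\psi^1$ such that $\phi^{-2}:=1$, $\phi^{-1}:=\varphi^1(\xi_{\mathrm{ini}})$, $\phi^j:=\psi^1(\xi_j)$ ($j\ge0$) have zero mean and finite nonzero second moment for $j\ge-1$. The system is $X_{k+1}=AX_k+BU_k+EW_k$, $X_0=X_{\mathrm{ini}}=x^{-2}_{\mathrm{ini}}+x^{-1}_{\mathrm{ini}}\phi^{-1}$,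 with scalar i.i.d. disturbances $W_k=\mathbb E[W]+w^0\phi^k$, $w^0\in\mathbb R$; inputs $U_k$ are square integrable and measurable w.r.t. $\sigma(X_i,i\le k)$; the stochastic LQ problem minimizes $\mathbb E[X_N^\top Q_NX_N]+\sum_{k=0}^{N-1}\mathbb E[X_k^\top QX_k+U_k^\top RU_k]$. Coefficient problem $\mathcal P_j$ ($j\in\{-2,\dots,N-1\}$): minimize $x_N^{j\top}Q_Nx_N^j+\sum_{k=0}^{N-1}(x_k^{j\top}Qx_k^j+u_k^{j\top}Ru_k^j)$ s.t. $x^j_{k+1}=Ax^j_k+Bu^j_k+Ew^j_k$, $x^j_0=x^j_{\mathrm{ini}}$ ($x^j_{\mathrm{ini}}=0$ for $j\ge0$), and $u^j_k=0$ for $k\le j$ when $j\ge 0$, where $w^{-2}_k=\mathbb E[W]$, $w^{-1}_k=0$, $w^j_k=w^0$ if $k=j$ and $0$ otherwise for $j\ge0$. Riccati recursion: $P_0=Q_N$, and for $k\ge1$: $K_k=-(R+B^\top P_{k-1}B)^{-1}B^\top P_{k-1}A$, $P_k=Q+A^\top(P_{k-1}-P_{k-1}B(R+B^\top P_{k-1}B)^{-1}B^\top P_{k-1})A$. For integers $k_1,k_2$: $\bar A_{k_1}^{k_2}:=(A+BK_{N-k_2})\cdots(A+BK_{N-k_1})$ (larger $k$ to the left) if $0\le k_1\le k_2$, and $I$ otherwise. *)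

theory Defs
  imports "HOL-Analysis.Analysis"
begin

definition psd :: "real^'n^'n \<Rightarrow> bool" where
  "psd M \<longleftrightarrow> transpose M = M \<and> (\<forall>x. 0 \<le> x \<bullet> (M *v x))"

definition pd :: "real^'n^'n \<Rightarrow> bool" where
  "pd M \<longleftrightarrow> transpose M = M \<and> (\<forall>x. x \<noteq> 0 \<longrightarrow> 0 < x \<bullet> (M *v x))"

definition msqrt :: "real^'n^'n \<Rightarrow> real^'n^'n" where
  "msqrt M = (SOME S. psd S \<and> S ** S = M)"

primrec mpow :: "real^'n^'n \<Rightarrow> nat \<Rightarrow> real^'n^'n" where
  "mpow M 0 = mat 1"
| "mpow M (Suc t) = M ** mpow M t"

definition schur_stable :: "real^'n^'n \<Rightarrow> bool" where
  "schur_stable M \<longleftrightarrow> (\<forall>x. (\<lambda>t. mpow M t *v x) \<longlonglongrightarrow> 0)"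

definition stabilizable :: "real^'n^'n \<Rightarrow> real^'m^'n \<Rightarrow> bool" where
  "stabilizable A B \<longleftrightarrow> (\<exists>K::real^'n^'m. schur_stable (A + B ** K))"

definition detectable :: "real^'n^'n \<Rightarrow> real^'n^'p \<Rightarrow> bool" where
  "detectable A C \<longleftrightarrow> (\<exists>L::real^'p^'n. schur_stable (A + L ** C))"

primrec ric_P :: "real^'n^'n \<Rightarrow> real^'m^'n \<Rightarrow> real^'n^'n \<Rightarrow> real^'m^'m \<Rightarrow> real^'n^'n
                   \<Rightarrow> nat \<Rightarrow> real^'n^'n" where
  "ric_P A B Q R QN 0 = QN"
| "ric_P A B Q R QN (Suc k) =
     (let P = ric_P A B Q R QN k in
      Q + transpose A ** (P - P ** B ** matrix_inv (R + transpose B ** P ** B) ** transpose B ** P) ** A)"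

(* gain K_k for k \<ge> 1 (uses P_{k-1}) *)
definition ric_K :: "real^'n^'n \<Rightarrow> real^'m^'n \<Rightarrow> real^'n^'n \<Rightarrow> real^'m^'m \<Rightarrow> real^'n^'n
                   \<Rightarrow> nat \<Rightarrow> real^'n^'m" where
  "ric_K A B Q R QN k =
     (let P = ric_P A B Q R QN (k - 1) in
      - (matrix_inv (R + transpose B ** P ** B) ** transpose B ** P ** A))"

(* \<bar>A_{k1}^{k2} = (A + B K_{N-k2}) \<cdots> (A + B K_{N-k1}) if 0 \<le> k1 \<le> k2, else I *)
definition Abar :: "real^'n^'n \<Rightarrow> real^'m^'n \<Rightarrow> real^'n^'n \<Rightarrow> real^'m^'m \<Rightarrow> real^'n^'n
                   \<Rightarrow> nat \<Rightarrow> int \<Rightarrow> int \<Rightarrow> real^'n^'n" where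
  "Abar A B Q R QN N k1 k2 =
     (if 0 \<le> k1 \<and> k1 \<le> k2
      then fold (\<lambda>k M. (A + B ** ric_K A B Q R QN (nat (int N - k))) ** M) [k1..k2] (mat 1)
      else mat 1)"

definition wcoef :: "real \<Rightarrow> real \<Rightarrow> int \<Rightarrow> nat \<Rightarrow> real" where
  "wcoef EW w0 j k = (if j = -2 then EW else if j = -1 then 0
                      else if int k = j then w0 else 0)"

definition xini :: "real^'n \<Rightarrow> real^'n \<Rightarrow> int \<Rightarrow> real^'n" where
  "xini x2 x1 j = (if j = -2 then x2 else if j = -1 then x1 else 0)"

definition coef_feasible ::
  "real^'n^'n \<Rightarrow> real^'m^'n \<Rightarrow> real^'n \<Rightarrow> nat \<Rightarrow> real^'n \<Rightarrow> real^'n \<Rightarrow> real \<Rightarrow> real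
   \<Rightarrow> int \<Rightarrow> (nat \<Rightarrow> real^'n) \<Rightarrow> (nat \<Rightarrow> real^'m) \<Rightarrow> bool" where
  "coef_feasible A B E N x2 x1 EW w0 j x u \<longleftrightarrow>
     x 0 = xini x2 x1 j \<and>
     (\<forall>k<N. x (Suc k) = A *v x k + B *v u k + wcoef EW w0 j k *\<^sub>R E) \<and>
     (0 \<le> j \<longrightarrow> (\<forall>k<N. int k \<le> j \<longrightarrow> u k = 0))"

definition coef_cost ::
  "real^'n^'n \<Rightarrow> real^'n^'n \<Rightarrow> real^'m^'m \<Rightarrow> nat \<Rightarrow> (nat \<Rightarrow> real^'n) \<Rightarrow> (nat \<Rightarrow> real^'m) \<Rightarrow> real" where
  "coef_cost QN Q R N x u =
     x N \<bullet> (QN *v x N) + (\<Sum>k<N. x k \<bullet> (Q *v x k) + u k \<bullet> (R *v u k))"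

definition coef_optimal ::
  "real^'n^'n \<Rightarrow> real^'m^'n \<Rightarrow> real^'n \<Rightarrow> real^'n^'n \<Rightarrow> real^'n^'n \<Rightarrow> real^'m^'m \<Rightarrow> nat
   \<Rightarrow> real^'n \<Rightarrow> real^'n \<Rightarrow> real \<Rightarrow> real
   \<Rightarrow> int \<Rightarrow> (nat \<Rightarrow> real^'n) \<Rightarrow> (nat \<Rightarrow> real^'m) \<Rightarrow> bool" where
  "coef_optimal A B E QN Q R N x2 x1 EW w0 j x u \<longleftrightarrow>
     coef_feasible A B E N x2 x1 EW w0 j x u \<and>
     (\<forall>x' u'. coef_feasible A B E N x2 x1 EW w0 j x' u' \<longrightarrow>
        coef_cost QN Q R N x u \<le> coef_cost QN Q R N x' u')"

end

theory Submission
  imports Defs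
begin

(* For j \<ge> 0 the coefficient problem P_j sees a single disturbance pulse w0 E at time j, before
   which its input is forced to zero; hence its state vanishes up to time j and equals w0 E at
   time j + 1.  Completing squares with the Riccati matrices writes the remaining cost as
   (w0 E)' P_{N-j-1} (w0 E) plus a sum of positive definite quadratic forms in the deviations
   u_t - K_{N-t} x_t, so the optimal input is the Riccati feedback and x^j_k = Abar_{j+1}^{k-1} w0 E
   for k > j.  In X_k - X_k^trun only the indices 0 .. k-p-1 and k .. N-1 survive, and the latter
   contribute x^j_k = 0. *)

lemma inner_matrix_vector_transpose:
  "((A::real^'n^'m) *v x) \<bullet> y = x \<bullet> (transpose A *v y)"
  by (metis dot_lmul_matrix inner_commute transpose_matrix_vector)

lemma transpose_add: "transpose (X + Y) = transpose X + transpose (Y::real^'n^'m)"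
  by (simp add: transpose_def vec_eq_iff)

lemma transpose_diff: "transpose (X - Y) = transpose X - transpose (Y::real^'n^'m)"
  by (simp add: transpose_def vec_eq_iff)

lemma matrix_vector_mult_uminus_left: "(- M) *v x = - (M *v (x::real^'n))"
  by (simp add: vec_eq_iff matrix_vector_mult_def sum_negf)

lemma matrix_inv_right:
  fixes M :: "real^'n^'n"
  assumes "invertible M"
  shows "M ** matrix_inv M = mat 1"
proof -
  have "\<exists>M'. M ** M' = mat 1 \<and> M' ** M = mat 1"
    using assms invertible_def by blast
  then have "M ** matrix_inv M = mat 1 \<and> matrix_inv M ** M = mat 1"
    unfolding matrix_inv_def by (rule someI_ex)
  then show ?thesis ..
qed

lemma transpose_matrix_inv_symmetric:
  fixes M :: "real^'n^'n"
  assumes "invertible M" "transpose M = M"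
  shows "transpose (matrix_inv M) = matrix_inv M"
proof -
  have left: "transpose (matrix_inv M) ** M = mat 1"
    by (metis assms matrix_transpose_mul matrix_inv_right transpose_mat)
  have "transpose (matrix_inv M) = transpose (matrix_inv M) ** (M ** matrix_inv M)"
    using matrix_inv_right[OF assms(1)] by (simp add: matrix_mul_rid)
  also have "\<dots> = matrix_inv M"
    by (simp add: matrix_mul_assoc left matrix_mul_lid)
  finally show ?thesis .
qed

lemma pd_imp_psd: "pd M \<Longrightarrow> psd M"
  unfolding pd_def psd_def by (metis inner_zero_left order.refl order.strict_implies_order)

lemma pd_imp_invertible:
  fixes M :: "real^'n^'n"
  assumes "pd M"
  shows "invertible M"
proof -
  have "\<forall>x. M *v x = 0 \<longrightarrow> x = 0"
    using assms unfolding pd_def by (metis inner_zero_right less_irrefl)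
  then show ?thesis
    using matrix_left_invertible_ker invertible_left_inverse by blast
qed

lemma quadratic_form_congruence:
  fixes B :: "real^'m^'n" and P :: "real^'n^'n" and R :: "real^'m^'m"
  shows "x \<bullet> ((R + transpose B ** P ** B) *v x) = x \<bullet> (R *v x) + (B *v x) \<bullet> (P *v (B *v x))"
  by (simp add: matrix_vector_mult_add_rdistrib inner_add_right inner_matrix_vector_transpose
      matrix_vector_mul_assoc matrix_mul_assoc)

lemma pd_add_congruence:
  fixes B :: "real^'m^'n" and P :: "real^'n^'n" and R :: "real^'m^'m"
  assumes "psd P" "pd R"
  shows "pd (R + transpose B ** P ** B)"
  unfolding pd_def
proof (intro conjI allI impI)
  show "transpose (R + transpose B ** P ** B) = R + transpose B ** P ** B"
    using assms unfolding psd_def pd_def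
    by (simp add: transpose_add matrix_transpose_mul matrix_mul_assoc)
  show "0 < x \<bullet> ((R + transpose B ** P ** B) *v x)" if "x \<noteq> 0" for x
    using assms that unfolding quadratic_form_congruence psd_def pd_def by (metis add_pos_nonneg)
qed

lemma riccati_completion_of_squares:
  fixes A :: "real^'n^'n" and B :: "real^'m^'n" and Q P' :: "real^'n^'n" and R :: "real^'m^'m"
  assumes sP: "transpose P' = P'" and sR: "transpose R = R"
    and inv: "invertible (R + transpose B ** P' ** B)"
  defines "M \<equiv> R + transpose B ** P' ** B"
  defines "K \<equiv> - (matrix_inv M ** transpose B ** P' ** A)"
  defines "P \<equiv> Q + transpose A ** (P' - P' ** B ** matrix_inv M ** transpose B ** P') ** A"
  shows "x \<bullet> (Q *v x) + u \<bullet> (R *v u) + (A *v x + B *v u) \<bullet> (P' *v (A *v x + B *v u))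
     = x \<bullet> (P *v x) + (u - K *v x) \<bullet> (M *v (u - K *v x))"
proof -
  define a where "a = A *v x"
  define z where "z = transpose B *v (P' *v a)"
  define w where "w = matrix_inv M *v z"
  have sM: "transpose M = M" unfolding M_def using sP sR
    by (simp add: transpose_add matrix_transpose_mul matrix_mul_assoc)
  have Mw: "M *v w = z"
    using matrix_inv_right[OF inv] by (simp add: w_def M_def matrix_vector_mul_assoc)
  have Kx: "K *v x = - w"
    unfolding K_def w_def z_def a_def
    by (simp add: matrix_vector_mul_assoc matrix_vector_mult_uminus_left matrix_mul_assoc)
  have Px: "P *v x = Q *v x + transpose A *v (P' *v a - P' *v (B *v w))"
    unfolding P_def a_def w_def z_def
    by (simp add: matrix_vector_mul_assoc[symmetric] algebra_simps)
  have Bz: "(B *v v) \<bullet> (P' *v a) = v \<bullet> z" for v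
    by (simp add: inner_matrix_vector_transpose z_def)
  have Bz': "a \<bullet> (P' *v (B *v v)) = v \<bullet> z" for v
    by (metis Bz inner_matrix_vector_transpose inner_commute sP)
  have wMu: "w \<bullet> (M *v u) = u \<bullet> z"
    by (metis inner_matrix_vector_transpose Mw inner_commute sM)
  have "(u - K *v x) \<bullet> (M *v (u - K *v x)) = u \<bullet> (M *v u) + u \<bullet> (M *v w) + w \<bullet> (M *v u) + w \<bullet> (M *v w)"
    by (simp add: Kx matrix_vector_right_distrib inner_add_left inner_add_right)
  also have "\<dots> = u \<bullet> (R *v u) + (B *v u) \<bullet> (P' *v (B *v u)) + 2 * (u \<bullet> z) + w \<bullet> z"
    using Mw wMu by (simp add: M_def quadratic_form_congruence inner_commute)
  finally have square: "(u - K *v x) \<bullet> (M *v (u - K *v x))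
      = u \<bullet> (R *v u) + (B *v u) \<bullet> (P' *v (B *v u)) + 2 * (u \<bullet> z) + w \<bullet> z" .
  have Ax: "x \<bullet> (transpose A *v v) = a \<bullet> v" for v
    by (simp add: a_def inner_matrix_vector_transpose)
  have P_form: "x \<bullet> (P *v x) = x \<bullet> (Q *v x) + a \<bullet> (P' *v a) - w \<bullet> z"
    unfolding Px inner_add_right Ax inner_diff_right Bz' by (simp add: inner_commute)
  have successor: "(A *v x + B *v u) \<bullet> (P' *v (A *v x + B *v u))
      = a \<bullet> (P' *v a) + 2 * (u \<bullet> z) + (B *v u) \<bullet> (P' *v (B *v u))"
    unfolding a_def[symmetric]
    by (simp add: matrix_vector_right_distrib inner_add_left inner_add_right Bz Bz')
  show ?thesis using square P_form successor by simp
qed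

definition ric_M :: "real^'n^'n \<Rightarrow> real^'m^'n \<Rightarrow> real^'n^'n \<Rightarrow> real^'m^'m \<Rightarrow> real^'n^'n
                   \<Rightarrow> nat \<Rightarrow> real^'m^'m" where
  "ric_M A B Q R QN m = R + transpose B ** ric_P A B Q R QN m ** B"

lemma ric_P_Suc:
  "ric_P A B Q R QN (Suc m) = Q + transpose A ** (ric_P A B Q R QN m
     - ric_P A B Q R QN m ** B ** matrix_inv (ric_M A B Q R QN m) ** transpose B ** ric_P A B Q R QN m) ** A"
  by (simp add: ric_M_def Let_def)

lemma ric_K_Suc:
  "ric_K A B Q R QN (Suc m) = - (matrix_inv (ric_M A B Q R QN m) ** transpose B ** ric_P A B Q R QN m ** A)"
  by (simp add: ric_K_def ric_M_def Let_def)

lemma psd_ric_P: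
  assumes "psd QN" "psd Q" "pd R"
  shows "psd (ric_P A B Q R QN m)"
proof (induction m)
  case 0
  then show ?case using assms by simp
next
  case (Suc m)
  define P' where "P' = ric_P A B Q R QN m"
  define M where "M = ric_M A B Q R QN m"
  have sP: "transpose P' = P'" using Suc P'_def psd_def by blast
  have sR: "transpose R = R" using assms(3) pd_def by blast
  have pdM: "pd M" unfolding M_def ric_M_def using pd_add_congruence Suc assms(3) by blast
  have sMi: "transpose (matrix_inv M) = matrix_inv M"
    using transpose_matrix_inv_symmetric pdM pd_imp_invertible pd_def by blast
  have P_Suc: "ric_P A B Q R QN (Suc m) = Q + transpose A ** (P' - P' ** B ** matrix_inv M ** transpose B ** P') ** A"
    unfolding ric_P_Suc P'_def M_def ..
  have "transpose (ric_P A B Q R QN (Suc m)) = ric_P A B Q R QN (Suc m)"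
    unfolding P_Suc using assms(2) sP sMi
    by (simp add: psd_def transpose_add transpose_diff matrix_transpose_mul matrix_mul_assoc)
  moreover have "0 \<le> x \<bullet> (ric_P A B Q R QN (Suc m) *v x)" for x
  proof -
    define K where "K = - (matrix_inv M ** transpose B ** P' ** A)"
    have invM: "invertible (R + transpose B ** P' ** B)"
      using pdM pd_imp_invertible unfolding M_def ric_M_def P'_def by blast
    have "x \<bullet> (ric_P A B Q R QN (Suc m) *v x) = x \<bullet> (Q *v x) + (K *v x) \<bullet> (R *v (K *v x))
        + (A *v x + B *v (K *v x)) \<bullet> (P' *v (A *v x + B *v (K *v x)))"
      using riccati_completion_of_squares[OF sP sR invM, where Q=Q and A=A and x=x and u="K *v x"]
      unfolding P_Suc K_def M_def ric_M_def P'_def by simp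
    then show ?thesis
      using assms(2,3) Suc pd_imp_psd unfolding psd_def P'_def by (metis add_nonneg_nonneg)
  qed
  ultimately show ?case unfolding psd_def by blast
qed

lemma pd_ric_M:
  assumes "psd QN" "psd Q" "pd R"
  shows "pd (ric_M A B Q R QN m)"
  unfolding ric_M_def using pd_add_congruence psd_ric_P[OF assms] assms(3) by blast

lemma ric_completion_of_squares:
  assumes "psd QN" "psd Q" "pd R"
  shows "x \<bullet> (Q *v x) + u \<bullet> (R *v u) + (A *v x + B *v u) \<bullet> (ric_P A B Q R QN m *v (A *v x + B *v u))
     = x \<bullet> (ric_P A B Q R QN (Suc m) *v x)
       + (u - ric_K A B Q R QN (Suc m) *v x) \<bullet> (ric_M A B Q R QN m *v (u - ric_K A B Q R QN (Suc m) *v x))"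
  unfolding ric_P_Suc ric_K_Suc ric_M_def
  by (rule riccati_completion_of_squares)
    (use psd_ric_P[OF assms] pd_ric_M[OF assms] assms(3) in
      \<open>auto simp: psd_def pd_def ric_M_def intro: pd_imp_invertible\<close>)

definition feedback_gap ::
  "real^'n^'n \<Rightarrow> real^'m^'n \<Rightarrow> real^'n^'n \<Rightarrow> real^'m^'m \<Rightarrow> real^'n^'n \<Rightarrow> nat
   \<Rightarrow> (nat \<Rightarrow> real^'n) \<Rightarrow> (nat \<Rightarrow> real^'m) \<Rightarrow> nat \<Rightarrow> real" where
  "feedback_gap A B Q R QN N x u t =
     (u t - ric_K A B Q R QN (N - t) *v x t) \<bullet>
       (ric_M A B Q R QN (N - Suc t) *v (u t - ric_K A B Q R QN (N - t) *v x t))"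

lemma feedback_gap_nonneg:
  assumes "psd QN" "psd Q" "pd R"
  shows "0 \<le> feedback_gap A B Q R QN N x u t"
  using pd_imp_psd[OF pd_ric_M[OF assms]] unfolding feedback_gap_def psd_def by blast

lemma feedback_gap_eq_0_iff:
  assumes "psd QN" "psd Q" "pd R"
  shows "feedback_gap A B Q R QN N x u t = 0 \<longleftrightarrow> u t = ric_K A B Q R QN (N - t) *v x t"
  using pd_ric_M[OF assms] unfolding feedback_gap_def pd_def
  by (metis diff_self eq_iff_diff_eq_0 inner_zero_left less_irrefl)

lemma cost_to_go:
  assumes "psd QN" "psd Q" "pd R"
    and dyn: "\<And>t. s \<le> t \<Longrightarrow> t < N \<Longrightarrow> x (Suc t) = A *v x t + B *v u t" and "s \<le> N"
  shows "x N \<bullet> (QN *v x N) + (\<Sum>t\<in>{s..<N}. x t \<bullet> (Q *v x t) + u t \<bullet> (R *v u t))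
     = x s \<bullet> (ric_P A B Q R QN (N - s) *v x s) + (\<Sum>t\<in>{s..<N}. feedback_gap A B Q R QN N x u t)"
  using dyn \<open>s \<le> N\<close>
proof (induction "N - s" arbitrary: s)
  case 0
  then show ?case by simp
next
  case (Suc d)
  then have "s < N" by simp
  then obtain m where m: "N - s = Suc m" "N - Suc s = m"
    by (metis Suc_diff_Suc)
  have IH: "x N \<bullet> (QN *v x N) + (\<Sum>t\<in>{Suc s..<N}. x t \<bullet> (Q *v x t) + u t \<bullet> (R *v u t))
     = x (Suc s) \<bullet> (ric_P A B Q R QN m *v x (Suc s)) + (\<Sum>t\<in>{Suc s..<N}. feedback_gap A B Q R QN N x u t)"
    using Suc.hyps Suc.prems \<open>s < N\<close> m by simp
  have "x s \<bullet> (Q *v x s) + u s \<bullet> (R *v u s) + x (Suc s) \<bullet> (ric_P A B Q R QN m *v x (Suc s))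
     = x s \<bullet> (ric_P A B Q R QN (N - s) *v x s) + feedback_gap A B Q R QN N x u s"
    unfolding Suc.prems(1)[OF order.refl \<open>s < N\<close>] feedback_gap_def m
    by (rule ric_completion_of_squares[OF assms(1-3)])
  then show ?case
    using IH \<open>s < N\<close> by (simp add: sum.atLeast_Suc_lessThan)
qed

lemma Abar_step:
  assumes "0 \<le> k1" "k1 \<le> k2"
  shows "Abar A B Q R QN N k1 k2
    = (A + B ** ric_K A B Q R QN (nat (int N - k2))) ** Abar A B Q R QN N k1 (k2 - 1)"
proof -
  have "fold (\<lambda>k M. (A + B ** ric_K A B Q R QN (nat (int N - k))) ** M) [k1..k2 - 1] (mat 1)
      = Abar A B Q R QN N k1 (k2 - 1)"
    unfolding Abar_def using assms by auto
  then show ?thesis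
    unfolding Abar_def using assms by (simp add: upto_rec2)
qed

definition pulse_response ::
  "real^'n^'n \<Rightarrow> real^'m^'n \<Rightarrow> real^'n^'n \<Rightarrow> real^'m^'m \<Rightarrow> real^'n^'n \<Rightarrow> nat
   \<Rightarrow> real^'n \<Rightarrow> real \<Rightarrow> nat \<Rightarrow> nat \<Rightarrow> real^'n" where
  "pulse_response A B Q R QN N E w0 j t =
     (if t \<le> j then 0 else Abar A B Q R QN N (int j + 1) (int t - 1) *v (w0 *\<^sub>R E))"

lemma pulse_response_Suc:
  "pulse_response A B Q R QN N E w0 j (Suc t) =
     (if t < j then 0 else if t = j then w0 *\<^sub>R E
      else (A + B ** ric_K A B Q R QN (N - t)) *v pulse_response A B Q R QN N E w0 j t)"
proof -
  have "Abar A B Q R QN N (int j + 1) (int t)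
      = (A + B ** ric_K A B Q R QN (N - t)) ** Abar A B Q R QN N (int j + 1) (int t - 1)" if "j < t"
    using Abar_step[of "int j + 1" "int t"] that by (simp add: nat_minus_as_int)
  then show ?thesis
    by (simp add: pulse_response_def Abar_def matrix_vector_mul_assoc)
qed

lemma coef_feasible_pulse:
  assumes feas: "coef_feasible A B E N x2 x1 EW w0 (int j) x u" and "j < N"
  shows coef_feasible_pulse_zero: "\<And>t. t \<le> j \<Longrightarrow> x t = 0 \<and> u t = 0"
    and coef_feasible_pulse_hit: "x (Suc j) = w0 *\<^sub>R E"
    and coef_feasible_pulse_free: "\<And>t. j < t \<Longrightarrow> t < N \<Longrightarrow> x (Suc t) = A *v x t + B *v u t"
proof -
  have dyn: "x (Suc t) = A *v x t + B *v u t + (if t = j then w0 else 0) *\<^sub>R E" if "t < N" for t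
    using feas that unfolding coef_feasible_def by (simp add: wcoef_def)
  have u0: "u t = 0" if "t \<le> j" for t
    using feas that \<open>j < N\<close> unfolding coef_feasible_def by simp
  show zero: "x t = 0 \<and> u t = 0" if "t \<le> j" for t
    using that
  proof (induction t)
    case 0
    then show ?case using feas u0 unfolding coef_feasible_def xini_def by simp
  next
    case (Suc t)
    then show ?case using dyn[of t] u0 \<open>j < N\<close> by simp
  qed
  show "x (Suc j) = w0 *\<^sub>R E" using dyn[of j] zero[of j] \<open>j < N\<close> by simp
  show "x (Suc t) = A *v x t + B *v u t" if "j < t" "t < N" for t
    using dyn[of t] that by simp
qed

lemma coef_cost_pulse:
  assumes "psd QN" "psd Q" "pd R"
    and feas: "coef_feasible A B E N x2 x1 EW w0 (int j) x u" and "j < N"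
  shows "coef_cost QN Q R N x u = (w0 *\<^sub>R E) \<bullet> (ric_P A B Q R QN (N - Suc j) *v (w0 *\<^sub>R E))
     + (\<Sum>t\<in>{Suc j..<N}. feedback_gap A B Q R QN N x u t)"
proof -
  let ?stage = "\<lambda>t. x t \<bullet> (Q *v x t) + u t \<bullet> (R *v u t)"
  have "(\<Sum>t<N. ?stage t) = (\<Sum>t<Suc j. ?stage t) + (\<Sum>t\<in>{Suc j..<N}. ?stage t)"
    using \<open>j < N\<close> unfolding lessThan_atLeast0 by (intro sum.atLeastLessThan_concat[symmetric]) auto
  also have "(\<Sum>t<Suc j. ?stage t) = 0"
    using coef_feasible_pulse_zero[OF feas \<open>j < N\<close>] by (intro sum.neutral) auto
  finally have "(\<Sum>t<N. ?stage t) = (\<Sum>t\<in>{Suc j..<N}. ?stage t)"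
    by simp
  moreover have "x N \<bullet> (QN *v x N) + (\<Sum>t\<in>{Suc j..<N}. ?stage t)
      = x (Suc j) \<bullet> (ric_P A B Q R QN (N - Suc j) *v x (Suc j))
        + (\<Sum>t\<in>{Suc j..<N}. feedback_gap A B Q R QN N x u t)"
    using coef_feasible_pulse_free[OF feas \<open>j < N\<close>] \<open>j < N\<close>
    by (intro cost_to_go[OF assms(1-3)]) auto
  ultimately show ?thesis
    by (simp add: coef_cost_def coef_feasible_pulse_hit[OF feas \<open>j < N\<close>])
qed

lemma pulse_response_eq_0: "t \<le> j \<Longrightarrow> pulse_response A B Q R QN N E w0 j t = 0"
  by (simp add: pulse_response_def)

lemma coef_feasible_pulse_response:
  "coef_feasible A B E N x2 x1 EW w0 (int j) (pulse_response A B Q R QN N E w0 j)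
     (\<lambda>t. if t \<le> j then 0 else ric_K A B Q R QN (N - t) *v pulse_response A B Q R QN N E w0 j t)"
  unfolding coef_feasible_def
  by (auto simp: pulse_response_Suc pulse_response_eq_0 wcoef_def xini_def algebra_simps
      matrix_vector_mul_assoc)

lemma coef_optimal_pulse_feedback:
  assumes "psd QN" "psd Q" "pd R"
    and opt: "coef_optimal A B E QN Q R N x2 x1 EW w0 (int j) x u"
    and "j < N" "j < t" "t < N"
  shows "u t = ric_K A B Q R QN (N - t) *v x t"
proof -
  let ?x = "pulse_response A B Q R QN N E w0 j"
  let ?u = "\<lambda>t. if t \<le> j then 0 else ric_K A B Q R QN (N - t) *v ?x t"
  let ?gaps = "\<lambda>x u. \<Sum>t\<in>{Suc j..<N}. feedback_gap A B Q R QN N x u t"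
  have feas: "coef_feasible A B E N x2 x1 EW w0 (int j) x u"
    using opt unfolding coef_optimal_def by blast
  have "coef_cost QN Q R N x u \<le> coef_cost QN Q R N ?x ?u"
    using opt coef_feasible_pulse_response unfolding coef_optimal_def by blast
  moreover have "?gaps ?x ?u = 0"
    by (intro sum.neutral) (simp add: feedback_gap_eq_0_iff[OF assms(1-3)])
  ultimately have "?gaps x u \<le> 0"
    using coef_cost_pulse[OF assms(1-3) feas \<open>j < N\<close>]
      coef_cost_pulse[OF assms(1-3) coef_feasible_pulse_response \<open>j < N\<close>] by simp
  then have "?gaps x u = 0"
    by (simp add: antisym feedback_gap_nonneg[OF assms(1-3)] sum_nonneg)
  then have "feedback_gap A B Q R QN N x u t = 0"
    using \<open>j < t\<close> \<open>t < N\<close> by (simp add: sum_nonneg_eq_0_iff feedback_gap_nonneg[OF assms(1-3)])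
  then show ?thesis
    using feedback_gap_eq_0_iff[OF assms(1-3)] by blast
qed

lemma coef_optimal_pulse_state:
  assumes "psd QN" "psd Q" "pd R"
    and opt: "coef_optimal A B E QN Q R N x2 x1 EW w0 (int j) x u"
    and "j < N" "t \<le> N"
  shows "x t = pulse_response A B Q R QN N E w0 j t"
  using \<open>t \<le> N\<close>
proof (induction t)
  case 0
  then show ?case
    using opt coef_feasible_pulse_zero[of A B E N x2 x1 EW w0 j x u 0] \<open>j < N\<close>
    by (simp add: coef_optimal_def pulse_response_eq_0)
next
  case (Suc t)
  have feas: "coef_feasible A B E N x2 x1 EW w0 (int j) x u"
    using opt unfolding coef_optimal_def by blast
  consider "t < j" | "t = j" | "j < t" by linarith
  then show ?case
  proof cases
    case 1
    then show ?thesis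
      using coef_feasible_pulse_zero[OF feas \<open>j < N\<close>, of "Suc t"] by (simp add: pulse_response_Suc)
  next
    case 2
    then show ?thesis
      using coef_feasible_pulse_hit[OF feas \<open>j < N\<close>] by (simp add: pulse_response_Suc)
  next
    case 3
    have "x (Suc t) = (A + B ** ric_K A B Q R QN (N - t)) *v x t"
      using coef_feasible_pulse_free[OF feas \<open>j < N\<close> 3] Suc.prems
        coef_optimal_pulse_feedback[OF assms(1-4) \<open>j < N\<close> 3]
      by (simp add: matrix_vector_mult_add_rdistrib matrix_vector_mul_assoc)
    then show ?thesis
      using 3 Suc by (simp add: pulse_response_Suc)
  qed
qed

theorem lemma2:
  fixes A :: "real^'n^'n" and B :: "real^'m^'n" and E :: "real^'n"
    and QN Q :: "real^'n^'n" and R :: "real^'m^'m"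
    and N p :: nat and x2 x1 :: "real^'n" and EW w0 :: real
    and xs :: "int \<Rightarrow> nat \<Rightarrow> real^'n" and us :: "int \<Rightarrow> nat \<Rightarrow> real^'m"
    and phi :: "int \<Rightarrow> 'w \<Rightarrow> real"
    and Xstar Xtrun :: "nat \<Rightarrow> 'w \<Rightarrow> real^'n"
  assumes "psd QN" and "psd Q" and "pd R"
    and "stabilizable A B" and "detectable A (msqrt Q)"
    and opt: "\<And>j. j \<in> {-2..int N - 1} \<Longrightarrow> coef_optimal A B E QN Q R N x2 x1 EW w0 j (xs j) (us j)"
    and Xstar_def: "\<And>k \<omega>. Xstar k \<omega> = (\<Sum>j\<in>{-2..int N - 1}. phi j \<omega> *\<^sub>R xs j k)"
    and Xtrun_def: "\<And>k \<omega>. Xtrun k \<omega> =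
          (\<Sum>j\<in>{-2,-1} \<union> {max 0 (int k - int p)..int k - 1}. phi j \<omega> *\<^sub>R xs j k)"
    and "k < N"
  shows "Xstar k \<omega> - Xtrun k \<omega> =
     (if k \<le> p then 0
      else (\<Sum>j\<in>{0..int k - int p - 1}.
              phi j \<omega> *\<^sub>R (Abar A B Q R QN N (j + 1) (int k - 1) *v (w0 *\<^sub>R E))))"
  proof -
  define g where "g j = phi j \<omega> *\<^sub>R xs j k" for j
  have state: "xs j k = pulse_response A B Q R QN N E w0 (nat j) k" if "0 \<le> j" "j < int N" for j
    using coef_optimal_pulse_state[OF assms(1-3) _ _ less_imp_le[OF \<open>k < N\<close>], where j="nat j"]
      opt[of j] that by simp
  have "Xstar k \<omega> - Xtrun k \<omega>
      = sum g ({-2..int N - 1} - ({-2, -1} \<union> {max 0 (int k - int p)..int k - 1}))"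
    unfolding Xstar_def Xtrun_def g_def by (rule sum_diff[symmetric]) (use \<open>k < N\<close> in auto)
  also have "{-2..int N - 1} - ({-2, -1} \<union> {max 0 (int k - int p)..int k - 1})
      = {0..int k - int p - 1} \<union> {int k..int N - 1}"
    using \<open>k < N\<close> by auto
  also have "sum g \<dots> = sum g {0..int k - int p - 1} + sum g {int k..int N - 1}"
    by (rule sum.union_disjoint) auto
  also have "sum g {int k..int N - 1} = 0"
    using state by (intro sum.neutral) (auto simp: g_def pulse_response_eq_0)
  also have "sum g {0..int k - int p - 1}
      = (\<Sum>j\<in>{0..int k - int p - 1}. phi j \<omega> *\<^sub>R (Abar A B Q R QN N (j + 1) (int k - 1) *v (w0 *\<^sub>R E)))"
    using state \<open>k < N\<close> by (intro sum.cong) (auto simp: g_def pulse_response_def)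
  finally show ?thesis by auto
qed

end
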